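(* Let $\alpha:\mathbb{Z}\curvearrowright X$ be a minimal continuous action on a compact Hausdorff space $X$, let $K$ be a topological group and $K_0\subset K$ a closed subgroup. Let $c:\mathbb{Z}\times X\to K_0$ be a continuous cocycle such that $c(n,x)=f(\alpha_n(x))f(x)^{-1}$ for all $n\in\mathbb{Z}$, $x\in X$, for some continuous map $f:X\to K$. Then there is a continuous map $f':X\to K_0$ such that $c(n,x)=f'(\alpha_n(x))f'(x)^{-1}$ for all $n\in\mathbb{Z}$ and $x\in X$.
   Context: A continuous map $c:G\times X\to K$ for an action $G\curvearrowright X$ is a cocycle if $c(g_1g_2,x)=c(g_1,g_2x)c(g_2,x)$ for all $g_1,g_2\in G$, $x\in X$. *)

theory Defs
  imports "HOL-Analysis.Analysis"
begin

definition int_action :: "(int \<Rightarrow> 'x \<Rightarrow> 'x) \<Rightarrow> bool" where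
  "int_action \<alpha> \<longleftrightarrow> \<alpha> 0 = id \<and> (\<forall>m n. \<alpha> (m + n) = \<alpha> m \<circ> \<alpha> n)"

text \<open>Continuity of the action (Z is discrete, so this means every alpha n is continuous).\<close>
definition continuous_int_action :: "(int \<Rightarrow> 'x::topological_space \<Rightarrow> 'x) \<Rightarrow> bool" where
  "continuous_int_action \<alpha> \<longleftrightarrow> int_action \<alpha> \<and> (\<forall>n. continuous_on UNIV (\<alpha> n))"

definition minimal_int_action :: "(int \<Rightarrow> 'x::topological_space \<Rightarrow> 'x) \<Rightarrow> bool" where
  "minimal_int_action \<alpha> \<longleftrightarrow>
     (\<forall>A. closed A \<and> (\<forall>n. \<alpha> n ` A \<subseteq> A) \<longrightarrow> A = {} \<or> A = UNIV)"

text \<open>Subgroup of a (not necessarily commutative) group written additively.\<close>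
definition subgroup_add :: "'k::group_add set \<Rightarrow> bool" where
  "subgroup_add H \<longleftrightarrow> 0 \<in> H \<and> (\<forall>a\<in>H. \<forall>b\<in>H. a + b \<in> H) \<and> (\<forall>a\<in>H. - a \<in> H)"

text \<open>Cocycle identity c(g1 g2, x) = c(g1, g2 x) c(g2, x), group law of K written as +.\<close>
definition cocycle :: "(int \<Rightarrow> 'x \<Rightarrow> 'x) \<Rightarrow> (int \<Rightarrow> 'x \<Rightarrow> 'k::group_add) \<Rightarrow> bool" where
  "cocycle \<alpha> c \<longleftrightarrow> (\<forall>g1 g2 x. c (g1 + g2) x = c g1 (\<alpha> g2 x) + c g2 x)"

end

theory Submission
  imports Defs
begin

text \<open>Normalise f so that it takes the value 0 at some point x0; the coboundary is unchanged.
  The set of points where the normalised map lies in K0 is closed, contains x0, and is invariant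
  because the map at \<alpha> n x differs from its value at x by the K0-element c n x on the left.
  Minimality forces this set to be everything.\<close>

lemma add_right_translate_minus:
  fixes u v a :: "'k::group_add"
  shows "(u + a) + - (v + a) = u + - v"
  by (simp only: add.assoc minus_add add_minus_cancel)

lemma minimal_int_action_closed_invariant_eq_UNIV:
  assumes "minimal_int_action \<alpha>" "closed A" "\<forall>n. \<alpha> n ` A \<subseteq> A" "x0 \<in> A"
  shows "A = UNIV"
  using assms unfolding minimal_int_action_def by blast

lemma coboundary_transfer_in_closed_subgroup:
  fixes \<alpha> :: "int \<Rightarrow> 'x::topological_space \<Rightarrow> 'x"
    and K0 :: "'k::topological_group_add set"
  assumes minimal: "minimal_int_action \<alpha>"
    and "closed K0" and K0: "subgroup_add K0"
    and c_in: "\<forall>n x. c n x \<in> K0"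
    and g_cont: "continuous_on UNIV g"
    and g_x0: "g x0 \<in> K0"
    and cob: "\<forall>n x. c n x = g (\<alpha> n x) + - g x"
  shows "g x \<in> K0"
proof -
  define A where "A = g -` K0"
  have "closed A"
    unfolding A_def using closed_vimage[OF \<open>closed K0\<close> g_cont] .
  moreover have "\<forall>n. \<alpha> n ` A \<subseteq> A"
  proof (intro allI subsetI)
    fix n y assume "y \<in> \<alpha> n ` A"
    then obtain x where "x \<in> A" and y: "y = \<alpha> n x" by auto
    have "g (\<alpha> n x) = c n x + g x"
      using cob by (simp add: add.assoc)
    moreover have "c n x + g x \<in> K0"
      using K0 c_in \<open>x \<in> A\<close> unfolding subgroup_add_def A_def by auto
    ultimately show "y \<in> A" using y unfolding A_def by simp
  qed
  moreover have "x0 \<in> A" using g_x0 unfolding A_def by simp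
  ultimately have "A = UNIV" using minimal_int_action_closed_invariant_eq_UNIV[OF minimal] by blast
  then show ?thesis unfolding A_def by auto
qed

theorem lemma2p3:
  fixes \<alpha> :: "int \<Rightarrow> 'x::t2_space \<Rightarrow> 'x"
    and K0 :: "'k::topological_group_add set"
    and c :: "int \<Rightarrow> 'x \<Rightarrow> 'k"
    and f :: "'x \<Rightarrow> 'k"
  assumes "compact (UNIV :: 'x set)"
    and "continuous_int_action \<alpha>"
    and "minimal_int_action \<alpha>"
    and "closed K0" and "subgroup_add K0"
    and "cocycle \<alpha> c"
    and "\<forall>n. continuous_on UNIV (c n)"
    and "\<forall>n x. c n x \<in> K0"
    and "continuous_on UNIV f"
    and "\<forall>n x. c n x = f (\<alpha> n x) + - f x"
  shows "\<exists>f'::'x \<Rightarrow> 'k. continuous_on UNIV f' \<and> (\<forall>x. f' x \<in> K0) \<and>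
           (\<forall>n x. c n x = f' (\<alpha> n x) + - f' x)"
proof -
  fix x0 :: 'x
  define g where "g = (\<lambda>x. f x + - f x0)"
  have g_cont: "continuous_on UNIV g"
    unfolding g_def by (intro continuous_intros assms(9))
  have cob: "\<forall>n x. c n x = g (\<alpha> n x) + - g x"
    unfolding g_def add_right_translate_minus using assms(10) .
  have "g x0 \<in> K0"
    using assms(5) unfolding g_def subgroup_add_def by simp
  then have "\<forall>x. g x \<in> K0"
    using coboundary_transfer_in_closed_subgroup[OF assms(3,4,5,8) g_cont _ cob] by blast
  then show ?thesis using g_cont cob by blast
qed

end
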